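(* Let $n\ge 2$ and let $S=\{A_1,\dots,A_m\}$ be a finite set of real $n\times n$ matrices such that every $A\in S$ satisfies $A\mathbf{1}=\mathbf{1}$ and $\|Ax\|_{\mathcal{P}}\le\|x\|_{\mathcal{P}}$ for all $x\in\mathbb{R}^n$. Consider the switched system $x(t+1)=A_{\sigma(t)}x(t)$, $x(0)=x_0$, with $\sigma:\mathbb{N}\to\{1,\dots,m\}$. Then the following are equivalent: (i) there exist $x_0\in\mathbb{R}^n$ and $\sigma$ such that $x(t)$ does not converge to a multiple of $\mathbf{1}$; (ii) there exist a proper open face $F$ of $\mathcal{P}$, a sequence $\sigma$ and an integer $k$ with $1\le k\le N$ such that $A_{\sigma(k-1)}\cdots A_{\sigma(0)}F\subseteq F\cup(-F)$, where $N=\tfrac12(3^n-2^{n+1}+1)$.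
   Context: $\mathbf{1}=(1,\dots,1)^\top\in\mathbb{R}^n$. The seminorm is $\|x\|_{\mathcal{P}}=\tfrac12(\max_i x_i-\min_i x_i)$ and $\mathcal{P}=\{x:\|x\|_{\mathcal{P}}\le 1\}$, a polyhedron with $\mathcal{P}=-\mathcal{P}$. A face of a polyhedron $\mathcal{Q}$ is a non-empty subset $F$ with $F=\mathcal{Q}$ or $F=\mathcal{Q}\cap\{x:b^\top x=c\}$ where $b^\top x\le c$ on $\mathcal{Q}$; a proper face is a face other than $\mathcal{Q}$; an open face is the relative interior of a face. $N$ is the number of pairs $\{F,-F\}$ of opposite proper open faces of $\mathcal{P}$. *)

theory Defs
  imports "HOL-Analysis.Analysis"
begin

definition pnorm :: "real^'n \<Rightarrow> real" where
  "pnorm x = (Max (range (\<lambda>i. x $ i)) - Min (range (\<lambda>i. x $ i))) / 2"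

definition Pball :: "(real^'n) set" where
  "Pball = {x. pnorm x \<le> 1}"

definition is_face :: "'a::euclidean_space set \<Rightarrow> 'a set \<Rightarrow> bool" where
  "is_face F Q \<longleftrightarrow> F \<noteq> {} \<and>
     (F = Q \<or> (\<exists>b c. (\<forall>x\<in>Q. b \<bullet> x \<le> c) \<and> F = Q \<inter> {x. b \<bullet> x = c}))"

primrec traj :: "(nat \<Rightarrow> real^'n^'n) \<Rightarrow> real^'n \<Rightarrow> nat \<Rightarrow> real^'n" where
  "traj \<sigma> x0 0 = x0"
| "traj \<sigma> x0 (Suc t) = \<sigma> t *v traj \<sigma> x0 t"

end

theory Submission
  imports Defs
begin

text \<open>
  The proper faces of the unit ball of the seminorm are indexed by pairs (I, J) of disjoint
  nonempty index sets: on the open face (I, J) the maximum of the coordinates is attained exactly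
  on I and the minimum exactly on J. A linear map that does not increase the seminorm and fixes
  the constant vectors either sends an open face into the interior of the ball or maps all of it
  into a single open face. Hence, if a trajectory stays on the unit sphere for N steps, the
  pigeonhole principle applied to the N pairs of opposite open faces yields a block of at most N
  matrices mapping some open face into itself or its opposite; conversely, repeating such a block
  keeps a trajectory on the unit sphere, so it cannot approach the constant vectors, where the
  seminorm vanishes. If no such block exists, every product of N matrices strictly contracts the
  unit sphere; compactness modulo constants and finiteness of S give a uniform factor, the
  seminorm decays geometrically, the increments are summable, and the limit has seminorm 0.
\<close>

section \<open>The seminorm\<close>

lemma pnorm_diff_le: "x $ i - x $ j \<le> 2 * pnorm (x :: real^'n)"
proof -
  have fin: "finite (range (\<lambda>i. x $ i))" by simp
  have "x $ i \<le> Max (range (\<lambda>i. x $ i))" "Min (range (\<lambda>i. x $ i)) \<le> x $ j"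
    using fin by (auto intro: Max_ge Min_le)
  then show ?thesis unfolding pnorm_def by (simp; linarith)
qed

lemma pnorm_attained:
  obtains i j where "x $ i - x $ j = 2 * pnorm (x :: real^'n)"
proof -
  have fin: "finite (range (\<lambda>i. x $ i))" and ne: "range (\<lambda>i. x $ i) \<noteq> {}" by simp_all
  obtain i where "Max (range (\<lambda>i. x $ i)) = x $ i" using Max_in[OF fin ne] by (metis imageE)
  moreover obtain j where "Min (range (\<lambda>i. x $ i)) = x $ j" using Min_in[OF fin ne] by (metis imageE)
  ultimately show thesis using that[of i j] unfolding pnorm_def by simp
qed

lemma pnorm_nonneg: "0 \<le> pnorm (x :: real^'n)"
  using pnorm_diff_le[of x undefined undefined] by simp

lemma pnorm_le_iff: "pnorm (x :: real^'n) \<le> r \<longleftrightarrow> (\<forall>i j. x $ i - x $ j \<le> 2 * r)"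
proof
  assume "pnorm x \<le> r"
  then show "\<forall>i j. x $ i - x $ j \<le> 2 * r"
    using pnorm_diff_le[of x] by (meson mult_left_mono order_trans zero_le_numeral)
next
  assume "\<forall>i j. x $ i - x $ j \<le> 2 * r"
  moreover obtain i j where "x $ i - x $ j = 2 * pnorm x" by (rule pnorm_attained)
  ultimately show "pnorm x \<le> r" by (metis mult_le_cancel_left_pos zero_less_numeral)
qed

lemma pnorm_eqI:
  assumes "\<And>i j. (x :: real^'n) $ i - x $ j \<le> 2 * r" and "x $ i0 - x $ j0 = 2 * r"
  shows "pnorm x = r"
  using assms pnorm_le_iff[of x r] pnorm_diff_le[of x i0 j0] by (simp add: antisym)

lemma pnorm_triangle: "pnorm (x + y) \<le> pnorm x + pnorm (y :: real^'n)"
  unfolding pnorm_le_iff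
proof (intro allI)
  fix i j
  show "(x + y) $ i - (x + y) $ j \<le> 2 * (pnorm x + pnorm y)"
    using pnorm_diff_le[of x i j] pnorm_diff_le[of y i j] by simp
qed

lemma pnorm_scaleR: "pnorm (c *\<^sub>R (x :: real^'n)) = \<bar>c\<bar> * pnorm x"
proof -
  obtain i j where ij: "x $ i - x $ j = 2 * pnorm x" by (rule pnorm_attained)
  have le: "\<bar>c\<bar> * (x $ k - x $ l) \<le> \<bar>c\<bar> * (2 * pnorm x)" for k l
    using pnorm_diff_le[of x k l] by (simp add: mult_left_mono)
  show ?thesis
  proof (cases "c \<ge> 0")
    case True
    show ?thesis by (rule pnorm_eqI[of _ _ i j]) (use True le ij in \<open>auto simp: algebra_simps\<close>)
  next
    case False
    show ?thesis
      by (rule pnorm_eqI[of _ _ j i]) (use False le ij in \<open>auto simp: algebra_simps\<close>)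
  qed
qed

lemma pnorm_uminus: "pnorm (- (x :: real^'n)) = pnorm x"
  using pnorm_scaleR[of "-1" x] by simp

lemma pnorm_diff_const: "pnorm ((x :: real^'n) - c *\<^sub>R vec 1) = pnorm x"
proof -
  have le: "pnorm (y - d *\<^sub>R vec 1) \<le> pnorm y" for y :: "real^'n" and d
    unfolding pnorm_le_iff using pnorm_diff_le[of y] by simp
  show ?thesis using le[of x c] le[of "x - c *\<^sub>R vec 1" "- c"] by simp
qed

lemma pnorm_eq_0_iff: "pnorm (x :: real^'n) = 0 \<longleftrightarrow> x = x $ i *\<^sub>R vec 1"
proof
  assume "pnorm x = 0"
  then have "x $ k = x $ i" for k using pnorm_diff_le[of x k i] pnorm_diff_le[of x i k] by simp
  then show "x = x $ i *\<^sub>R vec 1" by (simp add: vec_eq_iff)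
next
  assume x: "x = x $ i *\<^sub>R vec 1"
  have "x $ k = x $ i" for k using arg_cong[OF x, of "\<lambda>v. v $ k"] by simp
  then have "pnorm x \<le> 0" unfolding pnorm_le_iff by (metis diff_self order_refl mult_zero_right)
  then show "pnorm x = 0" using pnorm_nonneg[of x] by simp
qed

lemma pnorm_const: "pnorm (c *\<^sub>R vec 1 :: real^'n) = 0"
  using pnorm_eq_0_iff[of "c *\<^sub>R vec 1 :: real^'n" undefined] by simp

lemma pnorm_le_norm: "pnorm (x :: real^'n) \<le> norm x"
  unfolding pnorm_le_iff
proof (intro allI)
  fix i j
  show "x $ i - x $ j \<le> 2 * norm x"
    using component_le_norm_cart[of x i] component_le_norm_cart[of x j] by linarith
qed

lemma continuous_on_pnorm: "continuous_on UNIV (pnorm :: real^'n \<Rightarrow> real)"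
proof (rule lipschitz_on_continuous_on[of 1], rule lipschitz_onI)
  fix x y :: "real^'n"
  have "pnorm x \<le> pnorm y + norm (x - y)" "pnorm y \<le> pnorm x + norm (x - y)"
    using pnorm_triangle[of "x - y" y] pnorm_triangle[of "y - x" x]
      pnorm_le_norm[of "x - y"] pnorm_le_norm[of "y - x"] by (simp_all add: norm_minus_commute)
  then show "dist (pnorm x) (pnorm y) \<le> 1 * dist x y" by (simp add: dist_real_def dist_norm)
qed simp

lemma tendsto_pnorm: "X \<longlonglongrightarrow> (y :: real^'n) \<Longrightarrow> (\<lambda>t. pnorm (X t)) \<longlonglongrightarrow> pnorm y"
  using continuous_on_tendsto_compose[OF continuous_on_pnorm] by simp

lemma norm_sub_const_le: "norm ((x :: real^'n) - x $ i *\<^sub>R vec 1) \<le> 2 * CARD('n) * pnorm x"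
proof -
  have "norm (x - x $ i *\<^sub>R vec 1) \<le> (\<Sum>k\<in>UNIV. \<bar>x $ k - x $ i\<bar>)"
    using norm_le_l1_cart[of "x - x $ i *\<^sub>R vec 1"] by simp
  also have "\<dots> \<le> (\<Sum>k\<in>(UNIV :: 'n set). 2 * pnorm x)"
    using pnorm_diff_le[of x] by (intro sum_mono) (simp add: abs_le_iff)
  finally show ?thesis by simp
qed

section \<open>Faces of the unit ball\<close>

text \<open>If \<open>pnorm x = 1\<close>, these are the indices where the maximum, resp. the minimum, of the
  coordinates of \<open>x\<close> is attained.\<close>

definition top_idx :: "real^'n \<Rightarrow> 'n set" where
  "top_idx x = {i. \<exists>j. x $ i - x $ j = 2}"

definition bot_idx :: "real^'n \<Rightarrow> 'n set" where
  "bot_idx x = {j. \<exists>i. x $ i - x $ j = 2}"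

definition face_types :: "('n set \<times> 'n set) set" where
  "face_types = {(I, J). I \<noteq> {} \<and> J \<noteq> {} \<and> I \<inter> J = {}}"

text \<open>\<open>open_face I J\<close> is the relative interior of \<open>closed_face I J\<close>, and \<open>(J, I)\<close> indexes the
  opposite face.\<close>

definition closed_face :: "'n set \<Rightarrow> 'n set \<Rightarrow> (real^'n) set" where
  "closed_face I J = {x. pnorm x \<le> 1 \<and> (\<forall>i\<in>I. \<forall>j\<in>J. x $ i - x $ j = 2)}"

definition open_face :: "'n set \<Rightarrow> 'n set \<Rightarrow> (real^'n) set" where
  "open_face I J = {x. pnorm x = 1 \<and> top_idx x = I \<and> bot_idx x = J}"

definition sign_vector :: "'n set \<Rightarrow> real^'n" where
  "sign_vector I = (\<chi> l. if l \<in> I then 1 else -1)"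

lemma diff_eq_2_iff:
  assumes "pnorm x = 1"
  shows "x $ i - x $ j = 2 \<longleftrightarrow> i \<in> top_idx x \<and> j \<in> bot_idx x"
proof
  assume "i \<in> top_idx x \<and> j \<in> bot_idx x"
  then obtain i' j' where "x $ i - x $ j' = 2" "x $ i' - x $ j = 2"
    unfolding top_idx_def bot_idx_def by auto
  with pnorm_diff_le[of x i j] pnorm_diff_le[of x i' j'] assms show "x $ i - x $ j = 2" by linarith
qed (auto simp: top_idx_def bot_idx_def)

lemma face_type_of_unit:
  assumes "pnorm x = 1"
  shows "(top_idx x, bot_idx x) \<in> face_types"
proof -
  obtain i j where ij: "x $ i - x $ j = 2" using pnorm_attained[of x] assms by auto
  have "top_idx x \<inter> bot_idx x = {}"
    using diff_eq_2_iff[OF assms, of k k for k] by auto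
  moreover have "i \<in> top_idx x" "j \<in> bot_idx x" using ij unfolding top_idx_def bot_idx_def by auto
  ultimately show ?thesis unfolding face_types_def by auto
qed

lemma unit_in_open_face: "pnorm x = 1 \<Longrightarrow> x \<in> open_face (top_idx x) (bot_idx x)"
  unfolding open_face_def by simp

lemma uminus_open_face: "x \<in> open_face I J \<Longrightarrow> - x \<in> open_face J I"
proof -
  have "top_idx (- x) = bot_idx x" "bot_idx (- x) = top_idx x"
    unfolding top_idx_def bot_idx_def by (auto simp: algebra_simps)
  then show "x \<in> open_face I J \<Longrightarrow> - x \<in> open_face J I"
    unfolding open_face_def by (simp add: pnorm_uminus)
qed

lemma open_face_subset_closed_face: "open_face I J \<subseteq> closed_face I J"
  unfolding open_face_def closed_face_def using diff_eq_2_iff by auto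

lemma Pball_eq_closed_face: "Pball = closed_face {} {}"
  unfolding Pball_def closed_face_def by simp

lemma convex_closed_face: "convex (closed_face I J :: (real^'n) set)"
proof (unfold convex_def, intro ballI allI impI)
  fix x y :: "real^'n" and u v :: real
  assume x: "x \<in> closed_face I J" and y: "y \<in> closed_face I J" and uv: "0 \<le> u" "0 \<le> v" "u + v = 1"
  have diff: "(u *\<^sub>R x + v *\<^sub>R y) $ i - (u *\<^sub>R x + v *\<^sub>R y) $ j = u * (x $ i - x $ j) + v * (y $ i - y $ j)"
    for i j by (simp add: algebra_simps)
  show "u *\<^sub>R x + v *\<^sub>R y \<in> closed_face I J"
    unfolding closed_face_def pnorm_le_iff
  proof (intro CollectI conjI allI ballI)
    fix i j
    have "u * (x $ i - x $ j) + v * (y $ i - y $ j) \<le> u * 2 + v * 2"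
      using x y uv unfolding closed_face_def pnorm_le_iff by (intro add_mono mult_left_mono) auto
    then show "(u *\<^sub>R x + v *\<^sub>R y) $ i - (u *\<^sub>R x + v *\<^sub>R y) $ j \<le> 2 * 1"
      using uv by (simp only: diff)
  next
    fix i j assume "i \<in> I" "j \<in> J"
    then show "(u *\<^sub>R x + v *\<^sub>R y) $ i - (u *\<^sub>R x + v *\<^sub>R y) $ j = 2"
      using x y uv unfolding closed_face_def diff by (simp add: distrib_left[symmetric])
  qed
qed

lemma sign_vector_in_closed_face:
  assumes "I \<inter> J = {}"
  shows "sign_vector I \<in> closed_face I J" "- sign_vector J \<in> closed_face I J"
  using assms unfolding closed_face_def pnorm_le_iff sign_vector_def by auto

lemma rel_interior_supporting_linear_eq:
  fixes f :: "'a::euclidean_space \<Rightarrow> real"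
  assumes "convex C" "linear f" "\<And>v. v \<in> C \<Longrightarrow> f v \<le> c"
    and "z \<in> rel_interior C" "f z = c" "y \<in> C"
  shows "f y = c"
proof -
  obtain e where e: "e > 1" "(1 - e) *\<^sub>R y + e *\<^sub>R z \<in> C"
    using assms(4,6) convex_rel_interior_iff[OF assms(1)] by blast
  have "(1 - e) * f y + e * c \<le> c"
    using assms(3)[OF e(2)] assms(5) by (simp add: linear_add[OF assms(2)] linear_scale[OF assms(2)])
  then have "(e - 1) * (c - f y) \<le> 0" by (simp add: algebra_simps)
  then have "c \<le> f y" using e(1) by (simp add: mult_le_0_iff)
  then show ?thesis using assms(3)[OF assms(6)] by simp
qed

lemma linear_coord_diff: "linear (\<lambda>x :: real^'n. x $ i - x $ j)"
  by (simp add: linear_iff algebra_simps)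

lemma rel_interior_closed_face_subset:
  assumes "(I, J) \<in> face_types"
  shows "rel_interior (closed_face I J) \<subseteq> open_face I J"
proof
  fix z assume z: "z \<in> rel_interior (closed_face I J)"
  obtain i0 j0 where i0: "i0 \<in> I" and j0: "j0 \<in> J" and disj: "I \<inter> J = {}"
    using assms unfolding face_types_def by auto
  have zC: "z \<in> closed_face I J" using z rel_interior_subset by blast
  have tight: "y $ k - y $ l = 2" if "z $ k - z $ l = 2" "y \<in> closed_face I J" for y k l
  proof (rule rel_interior_supporting_linear_eq[OF convex_closed_face linear_coord_diff _ z])
    show "v $ k - v $ l \<le> 2" if "v \<in> closed_face I J" for v
      using that pnorm_diff_le[of v k l] unfolding closed_face_def by auto
  qed (use that in auto)
  have p: "pnorm z = 1"
    using zC i0 j0 pnorm_diff_le[of z i0 j0] unfolding closed_face_def by auto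
  have "I \<subseteq> top_idx z" "J \<subseteq> bot_idx z"
    using zC i0 j0 unfolding closed_face_def top_idx_def bot_idx_def by auto
  moreover have "top_idx z \<subseteq> I"
  proof
    fix k assume "k \<in> top_idx z"
    then have "z $ k - z $ j0 = 2" using diff_eq_2_iff[OF p] j0 \<open>J \<subseteq> bot_idx z\<close> by auto
    then have "sign_vector I $ k - sign_vector I $ j0 = 2"
      using tight sign_vector_in_closed_face[OF disj] by blast
    then show "k \<in> I" unfolding sign_vector_def by (auto split: if_splits)
  qed
  moreover have "bot_idx z \<subseteq> J"
  proof
    fix k assume "k \<in> bot_idx z"
    then have "z $ i0 - z $ k = 2" using diff_eq_2_iff[OF p] i0 \<open>I \<subseteq> top_idx z\<close> by auto
    then have "(- sign_vector J) $ i0 - (- sign_vector J) $ k = 2"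
      using tight sign_vector_in_closed_face[OF disj] by blast
    then show "k \<in> J" unfolding sign_vector_def by (auto split: if_splits)
  qed
  ultimately show "z \<in> open_face I J" using p unfolding open_face_def by auto
qed

lemma open_face_subset_rel_interior:
  "open_face I J \<subseteq> rel_interior (closed_face I J :: (real^'n) set)"
proof
  fix z assume z: "z \<in> open_face I J"
  txt \<open>Near \<open>z\<close> only the constraints indexed by \<open>I \<times> J\<close> can be active, and these hold
    with equality on the affine hull.\<close>
  define T where "T = (\<Inter>p \<in> - (I \<times> J). {x :: real^'n. x $ fst p - x $ snd p < 2})"
  define E where "E = {x :: real^'n. \<forall>i\<in>I. \<forall>j\<in>J. x $ i - x $ j = 2}"
  have "open T" unfolding T_def by (intro open_INT ballI open_Collect_less continuous_intros) auto
  moreover have "z \<in> T"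
  proof -
    have "z $ fst p - z $ snd p < 2" if "p \<notin> I \<times> J" for p
      using that z pnorm_diff_le[of z "fst p" "snd p"] diff_eq_2_iff[of z "fst p" "snd p"]
      unfolding open_face_def by (cases p) fastforce
    then show ?thesis unfolding T_def by blast
  qed
  moreover have "affine E"
    unfolding affine_def
  proof (intro ballI allI impI)
    fix x y :: "real^'n" and u v :: real
    assume "x \<in> E" "y \<in> E" "u + v = 1"
    moreover have "(u *\<^sub>R x + v *\<^sub>R y) $ i - (u *\<^sub>R x + v *\<^sub>R y) $ j
        = u * (x $ i - x $ j) + v * (y $ i - y $ j)" for i j
      by (simp add: algebra_simps)
    ultimately show "u *\<^sub>R x + v *\<^sub>R y \<in> E" unfolding E_def by auto
  qed
  then have "affine hull closed_face I J \<subseteq> E"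
    by (intro hull_minimal) (auto simp: E_def closed_face_def)
  moreover have "T \<inter> E \<subseteq> closed_face I J"
  proof
    fix x assume x: "x \<in> T \<inter> E"
    have "x $ fst p - x $ snd p \<le> 2 * 1" for p
    proof (cases "p \<in> I \<times> J")
      case True
      then show ?thesis using x unfolding E_def by (cases p) simp
    next
      case False
      then have "x \<in> {x. x $ fst p - x $ snd p < 2}" using x unfolding T_def by blast
      then show ?thesis by simp
    qed
    then have "pnorm x \<le> 1" unfolding pnorm_le_iff by (metis fst_conv snd_conv)
    then show "x \<in> closed_face I J" using x unfolding closed_face_def E_def by simp
  qed
  ultimately show "z \<in> rel_interior (closed_face I J)"
    using open_face_subset_closed_face[of I J] z unfolding rel_interior by blast
qed

lemma rel_interior_closed_face:
  "(I, J) \<in> face_types \<Longrightarrow> rel_interior (closed_face I J) = open_face I J"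
  using rel_interior_closed_face_subset open_face_subset_rel_interior by blast

lemma closed_face_proper_face:
  assumes "(I, J) \<in> face_types"
  shows "is_face (closed_face I J) (Pball :: (real^'n) set)" "closed_face I J \<noteq> Pball"
proof -
  obtain i0 j0 where "i0 \<in> I" "j0 \<in> J" "I \<inter> J = {}" using assms unfolding face_types_def by auto
  define b :: "real^'n" where "b = (\<Sum>p\<in>I \<times> J. axis (fst p) 1 - axis (snd p) 1)"
  define c where "c = (\<Sum>p\<in>I \<times> J. 2 :: real)"
  have b: "b \<bullet> x = (\<Sum>p\<in>I \<times> J. x $ fst p - x $ snd p)" for x
    unfolding b_def by (simp add: inner_sum_left inner_diff_left inner_axis')
  have le: "b \<bullet> x \<le> c" if "x \<in> Pball" for x
    using that unfolding b c_def Pball_def pnorm_le_iff by (intro sum_mono) auto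
  have "closed_face I J = Pball \<inter> {x. b \<bullet> x = c}"
  proof (intro set_eqI iffI)
    fix x assume x: "x \<in> closed_face I J"
    have "b \<bullet> x = c" unfolding b c_def using x by (intro sum.cong) (auto simp: closed_face_def)
    then show "x \<in> Pball \<inter> {x. b \<bullet> x = c}" using x unfolding closed_face_def Pball_def by simp
  next
    fix x assume x: "x \<in> Pball \<inter> {x. b \<bullet> x = c}"
    then have "(\<Sum>p\<in>I \<times> J. 2 - (x $ fst p - x $ snd p)) = 0"
      unfolding b c_def by (simp add: sum_subtractf)
    moreover have "\<forall>p\<in>I \<times> J. 0 \<le> 2 - (x $ fst p - x $ snd p)"
      using x unfolding Pball_def pnorm_le_iff by auto
    ultimately have "\<forall>p\<in>I \<times> J. 2 - (x $ fst p - x $ snd p) = 0"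
      using sum_nonneg_eq_0_iff[of "I \<times> J" "\<lambda>p. 2 - (x $ fst p - x $ snd p)", OF finite] by blast
    then show "x \<in> closed_face I J" using x unfolding closed_face_def Pball_def by auto
  qed
  then show "is_face (closed_face I J) Pball"
    using sign_vector_in_closed_face[OF \<open>I \<inter> J = {}\<close>] le unfolding is_face_def
    by (intro conjI disjI2 exI[of _ b] exI[of _ c]) auto
  have "0 \<notin> closed_face I J" using \<open>i0 \<in> I\<close> \<open>j0 \<in> J\<close> unfolding closed_face_def by auto
  then show "closed_face I J \<noteq> Pball" unfolding Pball_def by (auto simp: pnorm_le_iff)
qed

lemma convex_face_Pball: "is_face F (Pball :: (real^'n) set) \<Longrightarrow> convex F"
  unfolding is_face_def Pball_eq_closed_face
  using convex_closed_face convex_Int[OF convex_closed_face convex_hyperplane] by metis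

lemma proper_face_Pball_pnorm_eq_1:
  assumes "is_face F (Pball :: (real^'n) set)" "F \<noteq> Pball" "x \<in> F"
  shows "pnorm x = 1"
proof (rule ccontr)
  obtain b c where bc: "\<forall>y\<in>Pball. b \<bullet> y \<le> c" "F = Pball \<inter> {y. b \<bullet> y = c}"
    using assms(1,2) unfolding is_face_def by blast
  have x: "pnorm x \<le> 1" "b \<bullet> x = c" using assms(3) bc(2) unfolding Pball_def by auto
  assume "pnorm x \<noteq> 1"
  then have lt: "pnorm x < 1" using x(1) by simp
  have "b \<noteq> 0" using assms(2) bc x(2) by auto
  define t where "t = (1 - pnorm x) / (pnorm b + 1)"
  have t: "t > 0" "t * pnorm b \<le> 1 - pnorm x"
    using lt pnorm_nonneg[of b] by (auto simp: t_def field_simps)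
  have "pnorm (x + t *\<^sub>R b) \<le> 1"
    using pnorm_triangle[of x "t *\<^sub>R b"] pnorm_scaleR[of t b] t by simp
  then have "b \<bullet> (x + t *\<^sub>R b) \<le> c" using bc(1) unfolding Pball_def by auto
  moreover have "b \<bullet> (x + t *\<^sub>R b) = c + t * (b \<bullet> b)" using x(2) by (simp add: inner_add_right)
  moreover have "t * (b \<bullet> b) > 0" using t(1) \<open>b \<noteq> 0\<close> by simp
  ultimately show False by linarith
qed

lemma open_face_image:
  fixes L :: "real^'n \<Rightarrow> real^'n"
  assumes "linear L" "\<And>v. pnorm (L v) \<le> pnorm v" "(I, J) \<in> face_types"
    and "x \<in> open_face I J" "y \<in> open_face I J" "pnorm (L x) = 1"
  shows "L y \<in> open_face (top_idx (L x)) (bot_idx (L x))"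
proof -
  txt \<open>A pair tight for \<open>L u\<close> gives a linear functional bounded by 2 on the face and attaining
    2 at a relative interior point, so it attains 2 on the whole face.\<close>
  have transfer: "(L v) $ i - (L v) $ j = 2"
    if "u \<in> open_face I J" "v \<in> open_face I J" "(L u) $ i - (L u) $ j = 2" for u v i j
  proof (rule rel_interior_supporting_linear_eq[OF convex_closed_face, where f = "\<lambda>v. (L v) $ i - (L v) $ j"])
    show "linear (\<lambda>v. (L v) $ i - (L v) $ j)"
      using linear_compose[OF assms(1) linear_coord_diff] by (simp add: o_def)
    show "(L w) $ i - (L w) $ j \<le> 2" if "w \<in> closed_face I J" for w
      using that assms(2)[of w] pnorm_diff_le[of "L w" i j] unfolding closed_face_def by auto
  qed (use that rel_interior_closed_face[OF assms(3)] open_face_subset_closed_face in auto)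
  obtain i j where "(L x) $ i - (L x) $ j = 2" using pnorm_attained[of "L x"] assms(6) by auto
  then have "(L y) $ i - (L y) $ j = 2" using transfer assms(4,5) by blast
  moreover have "pnorm (L y) \<le> 1" using assms(2)[of y] assms(5) unfolding open_face_def by auto
  ultimately have "pnorm (L y) = 1" using pnorm_diff_le[of "L y" i j] by linarith
  moreover have "top_idx (L y) = top_idx (L x)" "bot_idx (L y) = bot_idx (L x)"
    unfolding top_idx_def bot_idx_def using transfer assms(4,5) by blast+
  ultimately show ?thesis unfolding open_face_def by simp
qed

section \<open>Trajectories\<close>

lemma traj_add_time: "traj \<sigma> x (s + k) = traj (\<lambda>u. \<sigma> (s + u)) (traj \<sigma> x s) k"
  by (induction k) simp_all

lemma traj_cong: "(\<And>u. u < k \<Longrightarrow> \<sigma> u = \<tau> u) \<Longrightarrow> traj \<sigma> x k = traj \<tau> x k"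
  by (induction k) simp_all

lemma linear_traj: "linear (\<lambda>x. traj \<sigma> x t)"
proof (induction t)
  case (Suc t)
  then show ?case using linear_compose[OF Suc matrix_vector_mul_linear] by (simp add: o_def)
qed (simp add: linear_id[unfolded id_def])

lemma traj_uminus: "traj \<sigma> (- x) t = - traj \<sigma> x t"
  using linear_neg[OF linear_traj] .

lemma traj_vec_1: "(\<And>t. \<sigma> t *v vec 1 = vec 1) \<Longrightarrow> traj \<sigma> (vec 1) t = vec 1"
  by (induction t) simp_all

lemma pnorm_traj_antimono:
  assumes "\<And>t x. pnorm (\<sigma> t *v x) \<le> pnorm x" "t \<le> t'"
  shows "pnorm (traj \<sigma> x t') \<le> pnorm (traj \<sigma> x t)"
  using lift_Suc_antimono_le[of "\<lambda>t. pnorm (traj \<sigma> x t)"] assms by simp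

lemma pnorm_traj_le: "(\<And>t x. pnorm (\<sigma> t *v x) \<le> pnorm x) \<Longrightarrow> pnorm (traj \<sigma> x t) \<le> pnorm x"
  using pnorm_traj_antimono[of \<sigma> 0 t x] by simp

section \<open>Pairs of opposite faces\<close>

definition antipodal_pairs :: "('n set \<times> 'n set) set set" where
  "antipodal_pairs = (\<lambda>p. {p, prod.swap p}) ` face_types"

lemma card_disjoint_pairs:
  "card {(I, J :: 'n::finite set). I \<inter> J = {}} = 3 ^ CARD('n)"
proof -
  define P where "P = {f :: 'n \<Rightarrow> nat. \<forall>i. f i \<in> {0, 1, 2}}"
  define \<phi> where "\<phi> f = ({i. f i = 1}, {i. f i = 2})" for f :: "'n \<Rightarrow> nat"
  have "bij_betw \<phi> P {(I, J). I \<inter> J = {}}"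
  proof (rule bij_betwI')
    show "\<phi> f = \<phi> g \<longleftrightarrow> f = g" if "f \<in> P" "g \<in> P" for f g
    proof
      assume "\<phi> f = \<phi> g"
      then have "f i = 1 \<longleftrightarrow> g i = 1" "f i = 2 \<longleftrightarrow> g i = 2" for i
        unfolding \<phi>_def by (auto simp: set_eq_iff)
      moreover have "f i \<in> {0, 1, 2}" "g i \<in> {0, 1, 2}" for i using that unfolding P_def by auto
      ultimately show "f = g" by (metis insertE singletonD ext)
    qed simp
    show "\<phi> f \<in> {(I, J). I \<inter> J = {}}" for f unfolding \<phi>_def by auto
    show "\<exists>f\<in>P. p = \<phi> f" if "p \<in> {(I, J). I \<inter> J = {}}" for p
    proof -
      obtain I J where p: "p = (I, J)" by (cases p)
      then have "I \<inter> J = {}" using that by simp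
      define f where "f i = (if i \<in> I then 1 else if i \<in> J then 2 else 0 :: nat)" for i
      have "f \<in> P" unfolding P_def f_def by auto
      moreover have "p = \<phi> f" using p \<open>I \<inter> J = {}\<close> unfolding \<phi>_def f_def by auto
      ultimately show ?thesis by blast
    qed
  qed
  then have "card {(I, J :: 'n set). I \<inter> J = {}} = card P" by (simp add: bij_betw_same_card)
  also have "P = (\<Pi>\<^sub>E i \<in> UNIV. {0, 1, 2})" unfolding P_def by (simp add: PiE_UNIV_domain Pi_def)
  then have "card P = 3 ^ CARD('n)" by (simp add: card_PiE numeral_3_eq_3)
  finally show ?thesis .
qed

lemma card_face_types:
  "card (face_types :: ('n::finite set \<times> 'n set) set) = 3 ^ CARD('n) + 1 - 2 ^ (CARD('n) + 1)"
proof -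
  define D where "D = {(I, J :: 'n set). I \<inter> J = {}}"
  define X where "X = {{} :: 'n set} \<times> (UNIV :: 'n set set)"
  define Y where "Y = (UNIV :: 'n set set) \<times> {{} :: 'n set}"
  have "card X = 2 ^ CARD('n)" "card Y = 2 ^ CARD('n)"
    using card_Pow[of "UNIV :: 'n set"] unfolding X_def Y_def by (simp_all add: card_cartesian_product)
  moreover have "X \<inter> Y = {({}, {})}" unfolding X_def Y_def by auto
  ultimately have cXY: "card (X \<union> Y) + 1 = 2 ^ (CARD('n) + 1)" using card_Un_Int[of X Y] by simp
  have "X \<union> Y \<subseteq> D" unfolding X_def Y_def D_def by auto
  moreover have "(face_types :: ('n set \<times> 'n set) set) = D - (X \<union> Y)" unfolding face_types_def D_def X_def Y_def by auto
  ultimately have "card (face_types :: ('n set \<times> 'n set) set) = card D - card (X \<union> Y)"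
    using card_Diff_subset[of "X \<union> Y" D] by simp
  moreover have "card (X \<union> Y) \<le> card D" using \<open>X \<union> Y \<subseteq> D\<close> by (simp add: card_mono)
  ultimately show ?thesis using cXY card_disjoint_pairs[where 'n = 'n] unfolding D_def by simp
qed

lemma card_antipodal_pairs:
  "card (antipodal_pairs :: ('n::finite set \<times> 'n set) set set)
     = (3 ^ CARD('n) + 1 - 2 ^ (CARD('n) + 1)) div 2"
proof -
  have "\<Union> antipodal_pairs = (face_types :: ('n set \<times> 'n set) set)"
    unfolding antipodal_pairs_def face_types_def by auto
  moreover have "card A = 2" if A: "A \<in> (antipodal_pairs :: ('n set \<times> 'n set) set set)" for A
  proof -
    obtain p where "p \<in> face_types" "A = {p, prod.swap p}"
      using A unfolding antipodal_pairs_def by blast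
    moreover obtain I J where "p = (I, J)" by (cases p)
    ultimately have "(I, J) \<in> face_types" "A = {(I, J), (J, I)}" by auto
    moreover then have "(I, J) \<noteq> (J, I)" unfolding face_types_def by auto
    ultimately show ?thesis by simp
  qed
  moreover have "A \<inter> B = {}" if "A \<in> antipodal_pairs" "B \<in> antipodal_pairs" "A \<noteq> B"
    for A B :: "('n set \<times> 'n set) set"
    using that unfolding antipodal_pairs_def by auto
  ultimately have "2 * card (antipodal_pairs :: ('n set \<times> 'n set) set set) = card (face_types :: ('n set \<times> 'n set) set)"
    using card_partition[of "antipodal_pairs :: ('n set \<times> 'n set) set set" 2] by simp
  then show ?thesis using card_face_types[where 'n = 'n] by simp
qed

section \<open>Invariant faces and non-convergence\<close>

lemma not_tendsto_const_if_unit_subseq: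
  fixes X :: "nat \<Rightarrow> real^'n" and f :: "nat \<Rightarrow> nat"
  assumes "strict_mono f" "\<And>q. pnorm (X (f q)) = 1"
  shows "\<not> X \<longlonglongrightarrow> c *\<^sub>R vec 1"
proof
  assume "X \<longlonglongrightarrow> c *\<^sub>R vec 1"
  then have "(\<lambda>q. pnorm ((X \<circ> f) q)) \<longlonglongrightarrow> pnorm (c *\<^sub>R vec 1 :: real^'n)"
    using LIMSEQ_subseq_LIMSEQ[OF _ assms(1)] by (intro tendsto_pnorm)
  then have "(\<lambda>q. pnorm (X (f q))) \<longlonglongrightarrow> 0" unfolding pnorm_const o_def .
  then show False using assms(2) by (simp add: LIMSEQ_const_iff)
qed

lemma not_convergent_if_invariant_face:
  assumes F: "is_face F (Pball :: (real^'n) set)" "F \<noteq> Pball" and "1 \<le> k"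
    and inv: "(\<lambda>x. traj \<sigma> x k) ` rel_interior F \<subseteq> rel_interior F \<union> uminus ` rel_interior F"
  obtains x0 where "\<not> (\<exists>c. traj (\<lambda>t. \<sigma> (t mod k)) x0 \<longlonglongrightarrow> c *\<^sub>R vec 1)"
proof -
  define R where "R = rel_interior F \<union> uminus ` rel_interior F"
  define \<tau> where "\<tau> t = \<sigma> (t mod k)" for t
  have "F \<noteq> {}" using F(1) unfolding is_face_def by blast
  then have "rel_interior F \<noteq> {}" using convex_face_Pball[OF F(1)] by (simp add: rel_interior_eq_empty)
  then obtain x0 where x0: "x0 \<in> rel_interior F" by blast
  have R_uminus: "- x \<in> R" if "x \<in> R" for x
    using that unfolding R_def by (metis (no_types) Un_iff image_iff minus_minus)
  have step: "traj \<sigma> x k \<in> R" if "x \<in> R" for x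
  proof -
    from that consider "x \<in> rel_interior F" | y where "y \<in> rel_interior F" "x = - y"
      unfolding R_def by blast
    then show ?thesis
    proof cases
      case 1
      then show ?thesis using inv unfolding R_def by blast
    next
      case (2 y)
      then have "traj \<sigma> y k \<in> R" using inv unfolding R_def by blast
      then show ?thesis using R_uminus 2 by (simp add: traj_uminus)
    qed
  qed
  have periodic: "traj \<tau> x0 (q * k) \<in> R" for q
  proof (induction q)
    case 0
    then show ?case using x0 unfolding R_def by simp
  next
    case (Suc q)
    have "traj (\<lambda>u. \<tau> (q * k + u)) y k = traj \<sigma> y k" for y
      by (rule traj_cong) (simp add: \<tau>_def)
    then have "traj \<tau> x0 (Suc q * k) = traj \<sigma> (traj \<tau> x0 (q * k)) k"
      using traj_add_time[of \<tau> x0 "q * k" k] by (simp add: add.commute)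
    then show ?case using step Suc by simp
  qed
  have "pnorm y = 1" if "y \<in> R" for y
    using that rel_interior_subset[of F] proper_face_Pball_pnorm_eq_1[OF F]
    unfolding R_def by (auto simp: pnorm_uminus)
  then have "pnorm (traj \<tau> x0 (q * k)) = 1" for q using periodic by blast
  moreover have "strict_mono (\<lambda>q. q * k)" using \<open>1 \<le> k\<close> by (intro strict_monoI) simp
  ultimately have "\<not> traj \<tau> x0 \<longlonglongrightarrow> c *\<^sub>R vec 1" for c
    by (intro not_tendsto_const_if_unit_subseq)
  then show thesis using that unfolding \<tau>_def by blast
qed

lemma open_face_image_self_or_opposite:
  fixes L :: "real^'n \<Rightarrow> real^'n"
  assumes "linear L" "\<And>v. pnorm (L v) \<le> pnorm v" "pnorm x = 1" "pnorm (L x) = 1"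
    and "(top_idx (L x), bot_idx (L x)) \<in> {(top_idx x, bot_idx x), (bot_idx x, top_idx x)}"
  shows "L ` open_face (top_idx x) (bot_idx x)
    \<subseteq> open_face (top_idx x) (bot_idx x) \<union> uminus ` open_face (top_idx x) (bot_idx x)"
proof (rule image_subsetI)
  fix y assume y: "y \<in> open_face (top_idx x) (bot_idx x)"
  have L_y: "L y \<in> open_face (top_idx (L x)) (bot_idx (L x))"
    using open_face_image[OF assms(1,2) face_type_of_unit[OF assms(3)] unit_in_open_face[OF assms(3)]
        y assms(4)] .
  from assms(5) consider "(top_idx (L x), bot_idx (L x)) = (top_idx x, bot_idx x)"
    | "(top_idx (L x), bot_idx (L x)) = (bot_idx x, top_idx x)" by blast
  then show "L y \<in> open_face (top_idx x) (bot_idx x) \<union> uminus ` open_face (top_idx x) (bot_idx x)"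
  proof cases
    case 1
    then show ?thesis using L_y by simp
  next
    case 2
    then have "- L y \<in> open_face (top_idx x) (bot_idx x)" using L_y uminus_open_face by simp
    then have "- (- L y) \<in> uminus ` open_face (top_idx x) (bot_idx x)" by (rule imageI)
    then show ?thesis by simp
  qed
qed

lemma invariant_open_face_of_unit_orbit:
  fixes \<sigma> :: "nat \<Rightarrow> real^'n^'n"
  assumes nonexp: "\<And>t x. pnorm (\<sigma> t *v x) \<le> pnorm x"
    and x: "pnorm x = 1" "pnorm (traj \<sigma> x N) = 1"
    and N: "N = card (antipodal_pairs :: ('n set \<times> 'n set) set set)"
  obtains I J s k where "(I, J) \<in> face_types" "1 \<le> k" "k \<le> N"
    "(\<lambda>y. traj (\<lambda>u. \<sigma> (s + u)) y k) ` open_face I J \<subseteq> open_face I J \<union> uminus ` open_face I J"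
proof -
  define X where "X t = traj \<sigma> x t" for t
  define h where "h t = (\<lambda>p. {p, prod.swap p}) (top_idx (X t), bot_idx (X t))" for t
  have unit: "pnorm (X t) = 1" if "t \<le> N" for t
    using pnorm_traj_antimono[of \<sigma> t N x, OF nonexp that] pnorm_traj_le[of \<sigma> x t, OF nonexp] x
    unfolding X_def by simp
  have "h ` {0..N} \<subseteq> antipodal_pairs"
    unfolding h_def antipodal_pairs_def using face_type_of_unit[OF unit] by auto
  then have "card (h ` {0..N}) \<le> N" unfolding N by (simp add: card_mono)
  then have "\<not> inj_on h {0..N}" by (intro pigeonhole) simp
  then obtain a b where ab: "a \<le> N" "b \<le> N" "a \<noteq> b" "h a = h b" unfolding inj_on_def by auto
  obtain s t where st: "s < t" "t \<le> N" "h s = h t"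
    using ab by (metis linorder_neqE_nat)
  define L where "L y = traj (\<lambda>u. \<sigma> (s + u)) y (t - s)" for y
  have "L (X s) = X t" unfolding L_def X_def using traj_add_time[of \<sigma> x s "t - s"] st by simp
  moreover have "linear L" unfolding L_def by (rule linear_traj)
  moreover have "pnorm (L v) \<le> pnorm v" for v unfolding L_def by (rule pnorm_traj_le) (rule nonexp)
  moreover have "(top_idx (X t), bot_idx (X t))
      \<in> {(top_idx (X s), bot_idx (X s)), (bot_idx (X s), top_idx (X s))}"
    using st(3) unfolding h_def by auto
  ultimately have "L ` open_face (top_idx (X s)) (bot_idx (X s))
      \<subseteq> open_face (top_idx (X s)) (bot_idx (X s)) \<union> uminus ` open_face (top_idx (X s)) (bot_idx (X s))"
    using open_face_image_self_or_opposite[of L "X s"] unit st by simp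
  moreover have "(top_idx (X s), bot_idx (X s)) \<in> face_types"
    using st by (intro face_type_of_unit unit) simp
  moreover have "1 \<le> t - s" "t - s \<le> N" using st by auto
  ultimately show thesis using that unfolding L_def by blast
qed

section \<open>Contraction and convergence\<close>

lemma compact_pnorm_sphere_slice: "compact {x :: real^'n. pnorm x = 1 \<and> x $ i = 0}"
proof (rule compact_eq_bounded_closed[THEN iffD2], rule conjI)
  show "bounded {x :: real^'n. pnorm x = 1 \<and> x $ i = 0}" unfolding bounded_iff
  proof (intro exI ballI)
    fix x :: "real^'n" assume "x \<in> {x. pnorm x = 1 \<and> x $ i = 0}"
    then show "norm x \<le> 2 * CARD('n)" using norm_sub_const_le[of x i] by simp
  qed
  show "closed {x :: real^'n. pnorm x = 1 \<and> x $ i = 0}"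
    by (intro closed_Collect_conj closed_Collect_eq continuous_on_pnorm continuous_intros)
qed

lemma pnorm_contraction_factor:
  fixes L :: "real^'n \<Rightarrow> real^'n"
  assumes L: "linear L" "L (vec 1) = vec 1" and contr: "\<And>x. pnorm x = 1 \<Longrightarrow> pnorm (L x) < 1"
  obtains r where "0 \<le> r" "r < 1" "\<And>x. pnorm (L x) \<le> r * pnorm x"
proof -
  obtain i0 :: 'n where True by simp
  txt \<open>Modulo constant vectors the unit sphere is compact; normalise by \<open>x $ i0 = 0\<close>.\<close>
  define K where "K = {x :: real^'n. pnorm x = 1 \<and> x $ i0 = 0}"
  have shift: "L (x - c *\<^sub>R vec 1) = L x - c *\<^sub>R vec 1" for x c
    using L by (simp add: linear_diff linear_scale)
  have normalize: "\<exists>y\<in>K. pnorm (L x) = pnorm x * pnorm (L y)" if p: "pnorm x > 0" for x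
  proof
    define y where "y = (1 / pnorm x) *\<^sub>R (x - x $ i0 *\<^sub>R vec 1)"
    have "pnorm y = 1" unfolding y_def pnorm_scaleR pnorm_diff_const using p by simp
    then show "y \<in> K" unfolding K_def y_def by simp
    have "pnorm (L y) = pnorm (L x) / pnorm x"
      unfolding y_def linear_scale[OF L(1)] shift pnorm_scaleR pnorm_diff_const using p by simp
    then show "pnorm (L x) = pnorm x * pnorm (L y)" using p by simp
  qed
  have zero: "pnorm (L x) = 0" if "pnorm x = 0" for x
  proof -
    have "L x = x $ i0 *\<^sub>R vec 1" using that pnorm_eq_0_iff[of x i0] L by (metis linear_scale)
    then show ?thesis by (simp only: pnorm_const)
  qed
  have "compact K" unfolding K_def by (rule compact_pnorm_sphere_slice)
  have "\<exists>r. 0 \<le> r \<and> r < 1 \<and> (\<forall>y\<in>K. pnorm (L y) \<le> r)"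
  proof (cases "K = {}")
    case False
    have "continuous_on K (\<lambda>y. pnorm (L y))"
      using continuous_on_compose2[OF continuous_on_pnorm linear_continuous_on[of L]] L(1)
      by (simp add: linear_conv_bounded_linear)
    then obtain y0 where "y0 \<in> K" "\<forall>y\<in>K. pnorm (L y) \<le> pnorm (L y0)"
      using continuous_attains_sup[OF \<open>compact K\<close> False] by blast
    then show ?thesis using contr[of y0] pnorm_nonneg[of "L y0"] unfolding K_def by blast
  qed (intro exI[of _ 0], simp)
  then obtain r where r: "0 \<le> r" "r < 1" "\<forall>y\<in>K. pnorm (L y) \<le> r" by blast
  have "pnorm (L x) \<le> r * pnorm x" for x
  proof (cases "pnorm x = 0")
    case True
    then show ?thesis using zero by simp
  next
    case False
    then have "pnorm x > 0" using pnorm_nonneg[of x] by simp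
    then obtain y where "y \<in> K" "pnorm (L x) = pnorm x * pnorm (L y)" using normalize by blast
    then show ?thesis using r(3) \<open>pnorm x > 0\<close> by (simp add: mult.commute mult_left_mono)
  qed
  then show thesis using that r(1,2) by blast
qed

lemma finite_block_maps:
  fixes S :: "(real^'n^'n) set"
  assumes "finite S"
  shows "finite {(\<lambda>x. traj \<sigma> x N) | \<sigma>. \<forall>t. \<sigma> t \<in> S}"
proof (rule finite_subset)
  show "{(\<lambda>x. traj \<sigma> x N) | \<sigma>. \<forall>t. \<sigma> t \<in> S}
      \<subseteq> (\<lambda>l x. traj (\<lambda>i. l ! i) x N) ` {l. set l \<subseteq> S \<and> length l = N}"
  proof clarify
    fix \<sigma> :: "nat \<Rightarrow> real^'n^'n" assume "\<forall>t. \<sigma> t \<in> S"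
    then have "map \<sigma> [0..<N] \<in> {l. set l \<subseteq> S \<and> length l = N}" by auto
    moreover have "(\<lambda>x. traj \<sigma> x N) = (\<lambda>x. traj (\<lambda>i. map \<sigma> [0..<N] ! i) x N)"
      by (intro ext traj_cong) simp
    ultimately show "(\<lambda>x. traj \<sigma> x N) \<in> (\<lambda>l x. traj (\<lambda>i. l ! i) x N) ` {l. set l \<subseteq> S \<and> length l = N}"
      by blast
  qed
  show "finite ((\<lambda>l x. traj (\<lambda>i. l ! i) x N) ` {l. set l \<subseteq> S \<and> length l = N})"
    using finite_lists_length_eq[OF assms] by simp
qed

lemma uniform_block_contraction:
  fixes S :: "(real^'n^'n) set"
  assumes "finite S" and stoch: "\<forall>A\<in>S. A *v vec 1 = vec 1"
    and contr: "\<And>\<sigma> x. \<forall>t. \<sigma> t \<in> S \<Longrightarrow> pnorm x = 1 \<Longrightarrow> pnorm (traj \<sigma> x N) < 1"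
  obtains \<rho> where "0 < \<rho>" "\<rho> < 1" "\<And>\<sigma> x. \<forall>t. \<sigma> t \<in> S \<Longrightarrow> pnorm (traj \<sigma> x N) \<le> \<rho> * pnorm x"
proof -
  define Ls where "Ls = {(\<lambda>x. traj \<sigma> x N) | \<sigma>. \<forall>t. \<sigma> t \<in> S}"
  have "\<exists>r. r < 1 \<and> (\<forall>x. pnorm (L x) \<le> r * pnorm x)" if L: "L \<in> Ls" for L
  proof -
    obtain \<sigma> where \<sigma>: "\<forall>t. \<sigma> t \<in> S" "L = (\<lambda>x. traj \<sigma> x N)" using L unfolding Ls_def by blast
    have "L (vec 1) = vec 1" using \<sigma> stoch traj_vec_1[of \<sigma> N] by simp
    moreover have "linear L" unfolding \<sigma>(2) by (rule linear_traj)
    ultimately obtain r where "r < 1" "\<And>x. pnorm (L x) \<le> r * pnorm x"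
      using pnorm_contraction_factor[of L] contr[OF \<sigma>(1)] \<sigma>(2) by blast
    then show ?thesis by blast
  qed
  then obtain r where r: "\<And>L. L \<in> Ls \<Longrightarrow> r L < 1 \<and> (\<forall>x. pnorm (L x) \<le> r L * pnorm x)"
    by metis
  define \<rho> where "\<rho> = Max (insert (1 / 2) (r ` Ls))"
  have fin: "finite (insert (1 / 2) (r ` Ls))" using finite_block_maps[OF \<open>finite S\<close>] unfolding Ls_def by simp
  have "0 < \<rho>" "\<rho> < 1" unfolding \<rho>_def using fin r by (auto simp: Max_gr_iff Max_less_iff)
  moreover have "pnorm (traj \<sigma> x N) \<le> \<rho> * pnorm x" if "\<forall>t. \<sigma> t \<in> S" for \<sigma> x
  proof -
    have L: "(\<lambda>x. traj \<sigma> x N) \<in> Ls" unfolding Ls_def using that by blast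
    have "pnorm (traj \<sigma> x N) \<le> r (\<lambda>x. traj \<sigma> x N) * pnorm x" using r[OF L] by blast
    also have "\<dots> \<le> \<rho> * pnorm x"
      unfolding \<rho>_def using fin L by (intro mult_right_mono Max_ge pnorm_nonneg) auto
    finally show ?thesis .
  qed
  ultimately show thesis using that by blast
qed

lemma displacement_bound:
  fixes S :: "(real^'n^'n) set"
  assumes "finite S" and stoch: "\<forall>A\<in>S. A *v vec 1 = vec 1"
  obtains C where "0 \<le> C" "\<And>A x. A \<in> S \<Longrightarrow> norm (A *v x - x) \<le> C * pnorm x"
proof -
  obtain i0 :: 'n where True by simp
  define B where "B = Max (insert 0 ((\<lambda>A. onorm ((*v) A)) ` S))"
  have B: "0 \<le> B" "onorm ((*v) A) \<le> B" if "A \<in> S" for A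
    unfolding B_def using \<open>finite S\<close> that by (auto intro: Max_ge)
  have "norm (A *v x - x) \<le> ((B + 1) * (2 * CARD('n))) * pnorm x" if "A \<in> S" for A x
  proof -
    define v where "v = x - x $ i0 *\<^sub>R vec 1"
    have "A *v x - x = A *v v - v"
      using stoch that unfolding v_def by (simp add: matrix_vector_mult_diff_distrib matrix_vector_mult_scaleR)
    also have "norm \<dots> \<le> onorm ((*v) A) * norm v + norm v"
      using onorm[OF matrix_vector_mul_bounded_linear[of A], of v] norm_triangle_ineq4[of "A *v v" v]
      by linarith
    also have "\<dots> \<le> (B + 1) * norm v"
      using mult_right_mono[OF B(2)[OF that] norm_ge_zero[of v]] by (simp add: algebra_simps)
    also have "\<dots> \<le> (B + 1) * (2 * CARD('n) * pnorm x)"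
      using norm_sub_const_le[of x i0] B[OF that] unfolding v_def by (intro mult_left_mono) auto
    finally show ?thesis by (simp add: mult.assoc)
  qed
  moreover have "0 \<le> (B + 1) * (2 * CARD('n))" using B(1) \<open>finite S\<close> unfolding B_def by simp
  ultimately show thesis using that by blast
qed

lemma convergent_to_consensus:
  fixes X :: "nat \<Rightarrow> real^'n"
  assumes step: "\<And>t. norm (X (Suc t) - X t) \<le> C * pnorm (X t)" and "0 \<le> C"
    and decay: "\<And>t. pnorm (X t) \<le> K * r ^ t" and "0 \<le> r" "r < 1"
  shows "\<exists>c. X \<longlonglongrightarrow> c *\<^sub>R vec 1"
proof -
  have "summable (\<lambda>t. norm (X (Suc t) - X t))"
  proof (rule summable_comparison_test'[where N = 0])
    show "summable (\<lambda>t. C * K * r ^ t)" using assms by (simp add: summable_mult summable_geometric)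
    show "norm (norm (X (Suc t) - X t)) \<le> C * K * r ^ t" for t
      using step[of t] mult_left_mono[OF decay[of t] \<open>0 \<le> C\<close>] by (simp add: mult.assoc)
  qed
  then have "summable (\<lambda>t. X (Suc t) - X t)" by (rule summable_norm_cancel)
  then obtain d where "(\<lambda>n. \<Sum>t<n. X (Suc t) - X t) \<longlonglongrightarrow> d" unfolding summable_def sums_def by blast
  then have "(\<lambda>n. X 0 + (X n - X 0)) \<longlonglongrightarrow> X 0 + d"
    unfolding sum_lessThan_telescope by (intro tendsto_add tendsto_const)
  then have lim: "X \<longlonglongrightarrow> X 0 + d" by simp
  have "(\<lambda>t. K * r ^ t) \<longlonglongrightarrow> 0"
    using LIMSEQ_power_zero[of r] assms(4,5) by (intro tendsto_mult_right_zero) simp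
  then have "(\<lambda>t. pnorm (X t)) \<longlonglongrightarrow> 0"
    by (rule Lim_null_comparison[rotated]) (simp add: decay pnorm_nonneg)
  then have "pnorm (X 0 + d) = 0" using tendsto_pnorm[OF lim] LIMSEQ_unique by blast
  then show ?thesis using lim pnorm_eq_0_iff[of "X 0 + d" undefined] by metis
qed

lemma power_div_le_root_power:
  fixes \<rho> :: real
  assumes "0 < \<rho>" "\<rho> < 1" "0 < N"
  shows "\<rho> ^ (t div N) \<le> root N \<rho> ^ t / \<rho>"
proof -
  define r where "r = root N \<rho>"
  have r: "0 < r" "r < 1" "r ^ N = \<rho>" unfolding r_def using assms by (simp_all add: real_root_gt_zero)
  have "r ^ t = r ^ (N * (t div N) + t mod N)" by simp
  then have split: "r ^ t = \<rho> ^ (t div N) * r ^ (t mod N)" by (simp only: power_add power_mult r(3))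
  have "\<rho> ^ (t div N) * \<rho> = \<rho> ^ (t div N) * r ^ N" using r by simp
  also have "\<dots> \<le> \<rho> ^ (t div N) * r ^ (t mod N)"
    using r assms by (intro mult_left_mono power_decreasing) auto
  also have "\<dots> = r ^ t" using split by simp
  finally show ?thesis unfolding r_def using assms by (simp add: pos_le_divide_eq)
qed

lemma convergent_if_blocks_contract:
  fixes S :: "(real^'n^'n) set"
  assumes "finite S" "\<forall>A\<in>S. A *v vec 1 = vec 1" and nonexp: "\<forall>A\<in>S. \<forall>x. pnorm (A *v x) \<le> pnorm x"
    and "0 < N" and contr: "\<And>\<sigma> x. \<forall>t. \<sigma> t \<in> S \<Longrightarrow> pnorm x = 1 \<Longrightarrow> pnorm (traj \<sigma> x N) < 1"
    and \<sigma>: "\<forall>t. \<sigma> t \<in> S"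
  shows "\<exists>c. traj \<sigma> x0 \<longlonglongrightarrow> c *\<^sub>R vec 1"
proof -
  obtain \<rho> where \<rho>: "0 < \<rho>" "\<rho> < 1"
    and block: "\<And>\<tau> x. \<forall>t. \<tau> t \<in> S \<Longrightarrow> pnorm (traj \<tau> x N) \<le> \<rho> * pnorm x"
    using uniform_block_contraction[OF assms(1,2) contr] by blast
  obtain C where C: "0 \<le> C" "\<And>A x. A \<in> S \<Longrightarrow> norm (A *v x - x) \<le> C * pnorm x"
    using displacement_bound[OF assms(1,2)] by blast
  have ne: "\<And>t x. pnorm (\<sigma> t *v x) \<le> pnorm x" using \<sigma> nonexp by blast
  have blocks: "pnorm (traj \<sigma> x0 (q * N)) \<le> \<rho> ^ q * pnorm x0" for q
  proof (induction q)
    case (Suc q)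
    have "traj \<sigma> x0 (Suc q * N) = traj (\<lambda>u. \<sigma> (q * N + u)) (traj \<sigma> x0 (q * N)) N"
      using traj_add_time[of \<sigma> x0 "q * N" N] by (simp add: add.commute)
    then have "pnorm (traj \<sigma> x0 (Suc q * N)) \<le> \<rho> * pnorm (traj \<sigma> x0 (q * N))"
      using block[of "\<lambda>u. \<sigma> (q * N + u)"] \<sigma> by simp
    also have "\<dots> \<le> \<rho> * (\<rho> ^ q * pnorm x0)" using Suc \<rho> by (simp add: mult_left_mono)
    finally show ?case by simp
  qed simp
  define r where "r = root N \<rho>"
  have decay: "pnorm (traj \<sigma> x0 t) \<le> (pnorm x0 / \<rho>) * r ^ t" for t
  proof -
    have "pnorm (traj \<sigma> x0 t) \<le> pnorm (traj \<sigma> x0 (t div N * N))"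
      by (rule pnorm_traj_antimono[OF ne]) (simp add: div_times_less_eq_dividend)
    also have "\<dots> \<le> \<rho> ^ (t div N) * pnorm x0" by (rule blocks)
    also have "\<dots> \<le> (r ^ t / \<rho>) * pnorm x0"
      unfolding r_def using power_div_le_root_power[OF \<rho> \<open>0 < N\<close>] pnorm_nonneg by (rule mult_right_mono)
    finally show ?thesis by (simp add: mult.commute)
  qed
  have "0 \<le> r" "r < 1" unfolding r_def using \<rho> \<open>0 < N\<close> by simp_all
  moreover have "norm (traj \<sigma> x0 (Suc t) - traj \<sigma> x0 t) \<le> C * pnorm (traj \<sigma> x0 t)" for t
    using C(2) \<sigma> by simp
  ultimately show ?thesis
    using convergent_to_consensus[of "traj \<sigma> x0" C "pnorm x0 / \<rho>" r] C(1) decay by blast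
qed

lemma unit_orbit_contracts_if_no_invariant_face:
  fixes S :: "(real^'n^'n) set"
  assumes nonexp: "\<forall>A\<in>S. \<forall>x. pnorm (A *v x) \<le> pnorm x"
    and no_face: "\<not> (\<exists>F \<sigma> k. is_face F (Pball :: (real^'n) set) \<and> F \<noteq> Pball \<and> (\<forall>t. \<sigma> t \<in> S) \<and>
      1 \<le> k \<and> k \<le> N \<and> (\<lambda>x. traj \<sigma> x k) ` rel_interior F \<subseteq> rel_interior F \<union> uminus ` rel_interior F)"
    and N: "N = card (antipodal_pairs :: ('n set \<times> 'n set) set set)"
    and \<sigma>: "\<forall>t. \<sigma> t \<in> S" and x: "pnorm x = 1"
  shows "pnorm (traj \<sigma> x N) < 1"
proof (rule ccontr)
  have ne: "\<And>t x. pnorm (\<sigma> t *v x) \<le> pnorm x" using \<sigma> nonexp by blast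
  assume "\<not> pnorm (traj \<sigma> x N) < 1"
  then have xN: "pnorm (traj \<sigma> x N) = 1" using pnorm_traj_le[of \<sigma> x N, OF ne] x by simp
  obtain I J s k where IJ: "(I, J) \<in> face_types" "1 \<le> k" "k \<le> N"
    and inv: "(\<lambda>y. traj (\<lambda>u. \<sigma> (s + u)) y k) ` open_face I J \<subseteq> open_face I J \<union> uminus ` open_face I J"
    by (rule invariant_open_face_of_unit_orbit[of \<sigma> x N, OF ne x xN N])
  have "\<exists>F \<sigma> k. is_face F (Pball :: (real^'n) set) \<and> F \<noteq> Pball \<and> (\<forall>t. \<sigma> t \<in> S) \<and>
      1 \<le> k \<and> k \<le> N \<and> (\<lambda>x. traj \<sigma> x k) ` rel_interior F \<subseteq> rel_interior F \<union> uminus ` rel_interior F"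
    using closed_face_proper_face[OF IJ(1)] rel_interior_closed_face[OF IJ(1)] IJ(2,3) inv \<sigma>
    by (intro exI[of _ "closed_face I J"] exI[of _ "\<lambda>u. \<sigma> (s + u)"] exI[of _ k]) simp
  then show False by (rule notE[OF no_face])
qed

theorem proposition1:
  fixes S :: "(real^'n^'n) set"
  assumes n2: "CARD('n) \<ge> 2"
    and finS: "finite S"
    and stoch: "\<forall>A\<in>S. A *v vec 1 = vec 1"
    and nonexp: "\<forall>A\<in>S. \<forall>x. pnorm (A *v x) \<le> pnorm x"
  shows "(\<exists>x0 \<sigma>. (\<forall>t. \<sigma> t \<in> S) \<and>
            \<not> (\<exists>c::real. traj \<sigma> x0 \<longlonglongrightarrow> c *\<^sub>R vec 1))
     \<longleftrightarrow>
         (\<exists>F \<sigma> k. is_face F (Pball :: (real^'n) set) \<and> F \<noteq> Pball \<and>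
            (\<forall>t. \<sigma> t \<in> S) \<and>
            1 \<le> k \<and> k \<le> (3 ^ CARD('n) + 1 - 2 ^ (CARD('n) + 1)) div 2 \<and>
            (\<lambda>x. traj \<sigma> x k) ` rel_interior F
               \<subseteq> rel_interior F \<union> uminus ` rel_interior F)"
    (is "?diverges \<longleftrightarrow> ?invariant_face")
proof
  assume ?diverges
  then obtain x0 \<sigma> where \<sigma>: "\<forall>t. \<sigma> t \<in> S" and no_lim: "\<not> (\<exists>c. traj \<sigma> x0 \<longlonglongrightarrow> c *\<^sub>R vec 1)"
    by blast
  define N where "N = card (antipodal_pairs :: ('n set \<times> 'n set) set set)"
  have N_eq: "N = (3 ^ CARD('n) + 1 - 2 ^ (CARD('n) + 1)) div 2"
    unfolding N_def by (rule card_antipodal_pairs)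
  obtain i j :: 'n where "i \<noteq> j" using n2 card_le_Suc0_iff_eq[of "UNIV :: 'n set"] by auto
  then have "({i}, {j}) \<in> face_types" unfolding face_types_def by auto
  then have "0 < N" unfolding N_def antipodal_pairs_def by (auto simp: card_gt_0_iff)
  show ?invariant_face
  proof (rule ccontr)
    assume "\<not> ?invariant_face"
    note no_face = this[folded N_eq]
    have contracts: "pnorm (traj \<tau> x N) < 1" if "\<forall>t. \<tau> t \<in> S" "pnorm x = 1" for \<tau> x
      using unit_orbit_contracts_if_no_invariant_face[OF nonexp no_face N_def that] .
    have "\<exists>c. traj \<sigma> x0 \<longlonglongrightarrow> c *\<^sub>R vec 1"
      by (rule convergent_if_blocks_contract[OF finS stoch nonexp \<open>0 < N\<close> contracts \<sigma>])
    with no_lim show False by blast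
  qed
next
  assume ?invariant_face
  then obtain F \<sigma> k where F: "is_face F Pball" "F \<noteq> Pball" and \<sigma>: "\<forall>t. \<sigma> t \<in> S" and "1 \<le> k"
    and inv: "(\<lambda>x. traj \<sigma> x k) ` rel_interior F \<subseteq> rel_interior F \<union> uminus ` rel_interior F"
    by blast
  obtain x0 where "\<not> (\<exists>c. traj (\<lambda>t. \<sigma> (t mod k)) x0 \<longlonglongrightarrow> c *\<^sub>R vec 1)"
    using not_convergent_if_invariant_face[OF F \<open>1 \<le> k\<close> inv] by blast
  moreover have "\<forall>t. \<sigma> (t mod k) \<in> S" using \<sigma> by blast
  ultimately show ?diverges by (intro exI[of _ x0] exI[of _ "\<lambda>t. \<sigma> (t mod k)"]) blast
qed

end
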